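(* Let $p>1$, $n\in\mathbb{N}$ and $\mathbf{k}$ as below. The entropy density $f_{p,\mathbf{k},n}(\alpha)$ is non-increasing in $\alpha\in(0,\infty)$: if $0<\alpha_1<\alpha_2$ then $f_{p,\mathbf{k},n}(\alpha_1)\ge f_{p,\mathbf{k},n}(\alpha_2)$.
   Context: $\mathbf{k}=(k_1,\dots,k_{m+1})$ integers with $0=k_1<\cdots<k_{m+1}=n$. For $\mathbf{x}\in\mathbb{R}^n$ put $\mathbf{x}_j=(x_{k_j+1},\dots,x_{k_{j+1}})$, $\|\mathbf{x}\|_{p,\mathbf{k},n}=(\sum_{j=1}^m\|\mathbf{x}_j\|_2^p)^{1/p}$ ($\|\cdot\|_2$ Euclidean norm), $d(\mathbf{x},\mathbf{y})=\|\mathbf{y}-\mathbf{x}\|_{p,\mathbf{k},n}$, $B(\mathbf{x},r)=\{\mathbf{y}:d(\mathbf{x},\mathbf{y})\le r\}$, and $r_n$ is the radius with $\mathrm{vol}(B(\mathbf 0,r_n))=1$. For bounded measurable $S\subseteq\mathbb{R}^n$ and integer $t\ge1$ let $\hat Z_S(t)=\frac1{t!}\int_{S^t}\mathbf 1[d(\mathbf{x}_i,\mathbf{x}_j)\ge2r_n\ \forall i\ne j]\,d\mathbf{x}_1\cdots d\mathbf{x}_t$, $\hat Z_S(0)=1$. With $V=V(R)=\mathrm{vol}(B(\mathbf 0,R))=(R/r_n)^n$, the entropy density is $$f_{p,\mathbf{k},n}(\alpha)=\lim_{R\to\infty}\frac{1}{\alpha V}\log\frac{\hat Z_{B(\mathbf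 0,R)}(\lfloor\alpha V\rfloor)}{V^{\lfloor\alpha V\rfloor}/\lfloor\alpha V\rfloor!}$$ (interpreted as $\liminf$ if the limit does not exist, with the convention $\log0=-\infty$, so values lie in $[-\infty,\infty)$). *)

theory Defs
  imports "HOL-Analysis.Analysis" "HOL-Probability.Probability"
begin

text \<open>Points of R^n are functions nat => real extensional on {..<n} (coordinates
 indexed 0..n-1). The block vector k is given by k 0 = 0 < k 1 < ... < k m = n;
 block j (j < m) consists of coordinates k j, ..., k (j+1) - 1.\<close>

definition Rn :: "nat \<Rightarrow> (nat \<Rightarrow> real) measure" where
  "Rn n = PiM {..<n} (\<lambda>_. lborel)"

definition vol :: "nat \<Rightarrow> (nat \<Rightarrow> real) set \<Rightarrow> real" where
  "vol n S = measure (Rn n) S"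

definition pknorm :: "real \<Rightarrow> (nat \<Rightarrow> nat) \<Rightarrow> nat \<Rightarrow> (nat \<Rightarrow> real) \<Rightarrow> real" where
  "pknorm p k m x = (\<Sum>j<m. (sqrt (\<Sum>i\<in>{k j..<k (Suc j)}. (x i)^2)) powr p) powr (1/p)"

definition pkdist :: "real \<Rightarrow> (nat \<Rightarrow> nat) \<Rightarrow> nat \<Rightarrow> (nat \<Rightarrow> real) \<Rightarrow> (nat \<Rightarrow> real) \<Rightarrow> real" where
  "pkdist p k m x y = pknorm p k m (\<lambda>i. y i - x i)"

definition pkball :: "real \<Rightarrow> (nat \<Rightarrow> nat) \<Rightarrow> nat \<Rightarrow> nat \<Rightarrow> (nat \<Rightarrow> real) \<Rightarrow> real \<Rightarrow> (nat \<Rightarrow> real) set" where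
  "pkball p k m n x r = {y \<in> space (Rn n). pkdist p k m x y \<le> r}"

definition origin :: "nat \<Rightarrow> nat \<Rightarrow> real" where
  "origin n = (\<lambda>i\<in>{..<n}. 0)"

definition unit_radius :: "real \<Rightarrow> (nat \<Rightarrow> nat) \<Rightarrow> nat \<Rightarrow> nat \<Rightarrow> real" where
  "unit_radius p k m n = (THE r. 0 < r \<and> vol n (pkball p k m n (origin n) r) = 1)"

definition Zhat :: "real \<Rightarrow> (nat \<Rightarrow> nat) \<Rightarrow> nat \<Rightarrow> nat \<Rightarrow> (nat \<Rightarrow> real) set \<Rightarrow> nat \<Rightarrow> real" where
  "Zhat p k m n S t = (if t = 0 then 1 else
     measure (PiM {..<t} (\<lambda>_. Rn n))
       {xs \<in> PiE {..<t} (\<lambda>_. S). \<forall>i<t. \<forall>j<t. i \<noteq> j \<longrightarrow>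
           pkdist p k m (xs i) (xs j) \<ge> 2 * unit_radius p k m n} / fact t)"

text \<open>The quantity whose liminf as R -> infinity is the entropy density; log 0 = -infinity.\<close>
definition entropy_quot :: "real \<Rightarrow> (nat \<Rightarrow> nat) \<Rightarrow> nat \<Rightarrow> nat \<Rightarrow> real \<Rightarrow> real \<Rightarrow> ereal" where
  "entropy_quot p k m n \<alpha> R =
    (let V = vol n (pkball p k m n (origin n) R);
         N = nat \<lfloor>\<alpha> * V\<rfloor>;
         Z = Zhat p k m n (pkball p k m n (origin n) R) N
     in if Z = 0 then -\<infinity> else ereal (ln (Z / (V ^ N / fact N)) / (\<alpha> * V)))"

definition entropy_density :: "real \<Rightarrow> (nat \<Rightarrow> nat) \<Rightarrow> nat \<Rightarrow> nat \<Rightarrow> real \<Rightarrow> ereal" where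
  "entropy_density p k m n \<alpha> = Liminf at_top (entropy_quot p k m n \<alpha>)"

end

theory Submission
  imports Defs
begin

(*
  Let M t be the measure of the set of t-tuples of points of the ball B(0, R) with pairwise
  distances at least 2 r_n, and V = vol B(0, R). Deleting one point of a separated (t + 1)-tuple
  leaves a separated t-tuple, so the Loomis-Whitney inequality for the product measure gives
  M (t + 1) ^ t <= M t ^ (t + 1). Hence r t = M t / V ^ t = Zhat t / (V ^ t / t!) lies in [0, 1]
  and r t powr (1 / t) is non-increasing, so ln (r N) / N <= ln (r N') / N' <= 0 for N' <= N.
  With N' = floor (alpha1 V) and N = floor (alpha2 V), the quotient ln (r N) / (alpha V) at
  alpha2 is at most (1 - O(1 / V)) times the one at alpha1, and letting R (hence V) tend to
  infinity compares the liminfs.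
*)

section \<open>A Hoelder-type inequality for nonnegative integrals\<close>

lemma power_le_power_imp_le_ennreal:
  fixes a b :: ennreal
  assumes "a ^ k \<le> b ^ k" and "k > 0"
  shows "a \<le> b"
proof (rule ccontr)
  assume "\<not> a \<le> b"
  then have ba: "b < a" by simp
  then have "b < top" using top.not_eq_extremum by fastforce
  then obtain r where r: "b = ennreal r" "r \<ge> 0" by (cases b) auto
  show False
  proof (cases "a = top")
    case True
    then have "b ^ k = top" using assms by (simp add: top_unique)
    then show False using r assms(2) by (simp add: power_eq_top_ennreal)
  next
    case False
    then obtain s where s: "a = ennreal s" "s \<ge> 0" by (cases a) auto
    have "r ^ k < s ^ k" using ba r s assms(2) by (simp add: ennreal_less_iff power_strict_mono)
    moreover have "s ^ k \<le> r ^ k" using assms(1) r s by (simp add: ennreal_power)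
    ultimately show False by simp
  qed
qed

lemma prod_le_mean_power:
  fixes x :: "'a \<Rightarrow> real"
  assumes "finite S" "S \<noteq> {}" "\<And>i. i \<in> S \<Longrightarrow> x i \<ge> 0"
  shows "(\<Prod>i\<in>S. x i) \<le> ((\<Sum>i\<in>S. x i) / card S) ^ card S"
proof -
  have k: "card S > 0" using assms by (simp add: card_gt_0_iff)
  have "(\<Prod>i\<in>S. x i) powr (1 / card S) \<le> (\<Sum>i\<in>S. x i) / card S"
    using arith_geom_mean[OF assms] by (simp add: sum_divide_distrib)
  moreover have "(\<Prod>i\<in>S. x i) = ((\<Prod>i\<in>S. x i) powr (1 / card S)) ^ card S"
    using k assms(3) prod_nonneg[of S x]
    by (cases "(\<Prod>i\<in>S. x i) = 0") (simp_all add: powr_realpow[symmetric] powr_powr)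
  ultimately show ?thesis by (metis power_mono powr_ge_zero)
qed

lemma prod_le_mean_power_ennreal:
  fixes x :: "'a \<Rightarrow> ennreal"
  assumes "finite S" "S \<noteq> {}"
  shows "(\<Prod>i\<in>S. x i) \<le> ((\<Sum>i\<in>S. x i) / of_nat (card S)) ^ card S"
proof (cases "\<exists>i\<in>S. x i = top")
  case True
  then have "(\<Sum>i\<in>S. x i) = top" using assms(1) ennreal_sum_eq_top by blast
  moreover have "top / of_nat (card S) = (top :: ennreal)"
    using assms by (simp add: divide_ennreal_def card_gt_0_iff)
  ultimately have "(\<Sum>i\<in>S. x i) / of_nat (card S) = top" by simp
  then show ?thesis using assms by (simp add: card_gt_0_iff)
next
  case False
  define y where "y i = enn2real (x i)" for i
  have x_eq: "x i = ennreal (y i)" if "i \<in> S" for i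
    using False that by (simp add: y_def less_top)
  have "(\<Prod>i\<in>S. x i) = (\<Prod>i\<in>S. ennreal (y i))"
    using x_eq by (auto intro!: prod.cong)
  also have "\<dots> = ennreal (\<Prod>i\<in>S. y i)"
    by (simp add: prod_ennreal y_def)
  also have "\<dots> \<le> ennreal (((\<Sum>i\<in>S. y i) / card S) ^ card S)"
    using prod_le_mean_power[OF assms, of y] by (intro ennreal_leI) (simp add: y_def)
  also have "\<dots> = ((\<Sum>i\<in>S. x i) / of_nat (card S)) ^ card S"
  proof -
    have "(\<Sum>i\<in>S. x i) = ennreal (\<Sum>i\<in>S. y i)"
      using x_eq by (simp add: sum_ennreal[symmetric] y_def)
    then show ?thesis
      using assms by (simp add: ennreal_power[symmetric] divide_ennreal card_gt_0_iff
          sum_nonneg y_def ennreal_of_nat_eq_real_of_nat)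
  qed
  finally show ?thesis .
qed

(* By AM-GM, g is pointwise at most C times the mean of the psi i, whose integral is 1. *)
lemma nn_integral_le_of_power_le_prod_normalized:
  fixes g :: "'a \<Rightarrow> ennreal" and \<psi> :: "'i \<Rightarrow> 'a \<Rightarrow> ennreal"
  assumes K: "finite K" "K \<noteq> {}"
    and \<psi>: "\<And>i. i \<in> K \<Longrightarrow> \<psi> i \<in> borel_measurable M" "\<And>i. i \<in> K \<Longrightarrow> (\<integral>\<^sup>+y. \<psi> i y \<partial>M) = 1"
    and le: "\<And>y. y \<in> space M \<Longrightarrow> g y ^ card K \<le> C ^ card K * (\<Prod>i\<in>K. \<psi> i y)"
  shows "(\<integral>\<^sup>+y. g y \<partial>M) \<le> C"
proof -
  let ?k = "of_nat (card K) :: ennreal"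
  have k: "card K > 0" using K by (simp add: card_gt_0_iff)
  have "g y \<le> C * ((\<Sum>i\<in>K. \<psi> i y) / ?k)" if "y \<in> space M" for y
  proof (rule power_le_power_imp_le_ennreal[OF _ k])
    have "g y ^ card K \<le> C ^ card K * ((\<Sum>i\<in>K. \<psi> i y) / ?k) ^ card K"
      using le[OF that] prod_le_mean_power_ennreal[OF K, of "\<lambda>i. \<psi> i y"]
      by (meson mult_left_mono order_trans zero_le)
    then show "g y ^ card K \<le> (C * ((\<Sum>i\<in>K. \<psi> i y) / ?k)) ^ card K"
      by (simp add: power_mult_distrib)
  qed
  then have "(\<integral>\<^sup>+y. g y \<partial>M) \<le> (\<integral>\<^sup>+y. C * ((\<Sum>i\<in>K. \<psi> i y) / ?k) \<partial>M)"
    by (intro nn_integral_mono) auto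
  also have "\<dots> = C * ((\<Sum>i\<in>K. \<integral>\<^sup>+y. \<psi> i y \<partial>M) / ?k)"
    using \<psi>(1) by (simp add: nn_integral_cmult nn_integral_divide nn_integral_sum)
  also have "\<dots> = C * (?k / ?k)"
    using \<psi>(2) by simp
  also have "\<dots> = C"
    using k by (simp add: ennreal_divide_self of_nat_less_top)
  finally show ?thesis .
qed

lemma nn_integral_eq_0_of_power_le_prod:
  fixes g :: "'a \<Rightarrow> ennreal" and \<phi> :: "'i \<Rightarrow> 'a \<Rightarrow> ennreal"
  assumes K: "finite K" "K \<noteq> {}"
    and g: "g \<in> borel_measurable M" and \<phi>: "\<And>i. i \<in> K \<Longrightarrow> \<phi> i \<in> borel_measurable M"
    and le: "\<And>y. y \<in> space M \<Longrightarrow> g y ^ card K \<le> c * (\<Prod>i\<in>K. \<phi> i y)"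
    and zero: "c * (\<Prod>i\<in>K. \<integral>\<^sup>+y. \<phi> i y \<partial>M) = 0"
  shows "(\<integral>\<^sup>+y. g y \<partial>M) = 0"
proof -
  have "AE y in M. c * (\<Prod>i\<in>K. \<phi> i y) = 0"
  proof (cases "c = 0")
    case False
    with zero K obtain j where j: "j \<in> K" "(\<integral>\<^sup>+y. \<phi> j y \<partial>M) = 0"
      by (auto simp: prod_zero_iff)
    then have "AE y in M. \<phi> j y = 0" using \<phi> by (simp add: nn_integral_0_iff_AE)
    then show ?thesis by eventually_elim (use j K in \<open>auto simp: prod_zero_iff\<close>)
  qed simp
  then have "AE y in M. g y = 0"
    using AE_space
  proof eventually_elim
    case (elim y)
    then have "g y ^ card K = 0" using le[of y] by (metis le_zero_eq)
    then show ?case using K by (simp add: card_gt_0_iff)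
  qed
  then show ?thesis using g by (simp add: nn_integral_0_iff_AE)
qed

lemma nn_integral_power_le_prod_nn_integral:
  fixes g :: "'a \<Rightarrow> ennreal" and \<phi> :: "'i \<Rightarrow> 'a \<Rightarrow> ennreal"
  assumes K: "finite K" "K \<noteq> {}"
    and g: "g \<in> borel_measurable M" and \<phi>: "\<And>i. i \<in> K \<Longrightarrow> \<phi> i \<in> borel_measurable M"
    and le: "\<And>y. y \<in> space M \<Longrightarrow> g y ^ card K \<le> c * (\<Prod>i\<in>K. \<phi> i y)"
  shows "(\<integral>\<^sup>+y. g y \<partial>M) ^ card K \<le> c * (\<Prod>i\<in>K. \<integral>\<^sup>+y. \<phi> i y \<partial>M)"
proof -
  define a where "a i = (\<integral>\<^sup>+y. \<phi> i y \<partial>M)" for i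
  have k: "card K > 0" using K by (simp add: card_gt_0_iff)
  consider "c * (\<Prod>i\<in>K. a i) = 0" | "c * (\<Prod>i\<in>K. a i) = top"
    | "c * (\<Prod>i\<in>K. a i) \<noteq> 0" "c * (\<Prod>i\<in>K. a i) \<noteq> top" by auto
  then show ?thesis
  proof cases
    case 1
    then show ?thesis
      using nn_integral_eq_0_of_power_le_prod[OF K g \<phi> le] k by (simp add: a_def power_0_left)
  next
    case 2
    then show ?thesis by (simp add: a_def)
  next
    case 3
    have prod_a: "(\<Prod>i\<in>K. a i) \<noteq> 0" "(\<Prod>i\<in>K. a i) \<noteq> top"
      using 3 by (simp_all add: ennreal_mult_eq_top_iff)
    have a: "a i \<noteq> 0 \<and> a i \<noteq> top" if "i \<in> K" for i
      using prod_a that K by (simp add: ennreal_prod_eq_top)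
    obtain P where P: "c * (\<Prod>i\<in>K. a i) = ennreal P" "P \<ge> 0"
      using 3 by (cases "c * (\<Prod>i\<in>K. a i)") auto
    define C where "C = ennreal (root (card K) P)"
    have C: "C ^ card K = c * (\<Prod>i\<in>K. a i)"
      using P k by (simp add: C_def ennreal_power real_root_pow_pos2 real_root_ge_zero)
    define \<psi> where "\<psi> i y = \<phi> i y / a i" for i y
    have "(\<integral>\<^sup>+y. g y \<partial>M) \<le> C"
    proof (rule nn_integral_le_of_power_le_prod_normalized[OF K])
      show "\<psi> i \<in> borel_measurable M" if "i \<in> K" for i
        using \<phi>[OF that] unfolding \<psi>_def by measurable
      show "(\<integral>\<^sup>+y. \<psi> i y \<partial>M) = 1" if "i \<in> K" for i
        using \<phi>[OF that] a[OF that]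
        by (simp add: \<psi>_def nn_integral_divide a_def[symmetric] ennreal_divide_self less_top)
      fix y assume "y \<in> space M"
      have scale: "a i * \<psi> i y = \<phi> i y" if "i \<in> K" for i
      proof -
        have "a i * \<psi> i y = \<phi> i y * a i / a i"
          by (simp add: \<psi>_def ennreal_times_divide mult.commute)
        then show ?thesis using a[OF that] by (simp add: ennreal_mult_divide_eq)
      qed
      have phi: "(\<Prod>i\<in>K. \<phi> i y) = (\<Prod>i\<in>K. a i) * (\<Prod>i\<in>K. \<psi> i y)"
        unfolding prod.distrib[symmetric] using scale by (intro prod.cong) auto
      have "g y ^ card K \<le> c * (\<Prod>i\<in>K. \<phi> i y)"
        by (rule le[OF \<open>y \<in> space M\<close>])
      also have "\<dots> = C ^ card K * (\<Prod>i\<in>K. \<psi> i y)"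
        by (simp only: C phi mult.assoc)
      finally show "g y ^ card K \<le> C ^ card K * (\<Prod>i\<in>K. \<psi> i y)" .
    qed
    then have "(\<integral>\<^sup>+y. g y \<partial>M) ^ card K \<le> C ^ card K" by (rule power_mono_ennreal)
    then show ?thesis unfolding C a_def .
  qed
qed

section \<open>Packing profiles\<close>

(* The last conjunct says that r t powr (1 / t) is non-increasing for t >= 1. *)
definition packing_profile :: "(nat \<Rightarrow> real) \<Rightarrow> bool" where
  "packing_profile r \<longleftrightarrow> r 0 = 1 \<and> (\<forall>t. 0 \<le> r t \<and> r t \<le> 1) \<and> (\<forall>a b. 1 \<le> a \<longrightarrow> a \<le> b \<longrightarrow> r b ^ a \<le> r a ^ b)"

(* entropy_quot written in terms of r t = Zhat t / (V ^ t / t!). *)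
definition profile_entropy_quot :: "(nat \<Rightarrow> real) \<Rightarrow> real \<Rightarrow> real \<Rightarrow> ereal" where
  "profile_entropy_quot r V \<alpha> =
    (let N = nat \<lfloor>\<alpha> * V\<rfloor> in if r N = 0 then -\<infinity> else ereal (ln (r N) / (\<alpha> * V)))"

lemma packing_profile_normalize:
  assumes "V > 0" and "\<And>t. 0 \<le> M t" and "\<And>t. M t \<le> V ^ t"
    and "\<And>a b. 1 \<le> a \<Longrightarrow> a \<le> b \<Longrightarrow> M b ^ a \<le> M a ^ b"
  shows "packing_profile (\<lambda>t. if t = 0 then 1 else M t / V ^ t)"
  unfolding packing_profile_def
proof (intro conjI allI impI)
  fix a b :: nat assume ab: "1 \<le> a" "a \<le> b"
  have "(M b / V ^ b) ^ a = M b ^ a / V ^ (a * b)"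
    by (simp add: power_divide power_mult[symmetric] mult.commute)
  also have "\<dots> \<le> M a ^ b / V ^ (a * b)"
    using assms(1) assms(4)[OF ab] by (simp add: divide_right_mono)
  also have "\<dots> = (M a / V ^ a) ^ b"
    by (simp add: power_divide power_mult[symmetric])
  finally show "(if b = 0 then 1 else M b / V ^ b) ^ a \<le> (if a = 0 then 1 else M a / V ^ a) ^ b"
    using ab by simp
qed (use assms(1-3) in auto)

lemma packing_profileD:
  assumes "packing_profile r"
  shows "r 0 = 1" and "0 \<le> r t" and "r t \<le> 1" and "1 \<le> a \<Longrightarrow> a \<le> b \<Longrightarrow> r b ^ a \<le> r a ^ b"
  using assms by (auto simp: packing_profile_def)

lemma profile_entropy_quot_nonpos:
  assumes "packing_profile r" and "\<alpha> > 0" and "V \<ge> 0"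
  shows "profile_entropy_quot r V \<alpha> \<le> 0"
proof -
  have "ln (r N) \<le> 0" if "r N \<noteq> 0" for N
    using packing_profileD(2,3)[OF assms(1), of N] that by simp
  then show ?thesis
    using assms(2,3) by (simp add: profile_entropy_quot_def Let_def divide_nonpos_nonneg)
qed

lemma ln_packing_profile_mono:
  assumes "packing_profile r" and "1 \<le> a" "a \<le> b" and "r b > 0"
  shows "r a > 0" and "a * ln (r b) \<le> b * ln (r a)"
proof -
  have chain: "r b ^ a \<le> r a ^ b"
    using packing_profileD(4)[OF assms(1-3)] .
  moreover have "r b ^ a > 0" using assms(4) by simp
  ultimately show ra: "r a > 0"
    using packing_profileD(2)[OF assms(1), of a] assms(2,3)
    by (cases "r a = 0") (auto simp: power_0_left)
  have "ln (r b ^ a) \<le> ln (r a ^ b)"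
    using chain ra assms(4) by simp
  then show "a * ln (r b) \<le> b * ln (r a)"
    using ra assms(4) by (simp add: ln_realpow)
qed

lemma floor_mult_ratio_ge:
  fixes a1 a2 c V :: real
  assumes a: "0 < a1" "a1 < a2" and c: "0 < c" "c < 1" and V: "1 / (a2 * (1 - c)) \<le> V"
  shows "c * a2 * nat \<lfloor>a1 * V\<rfloor> \<le> a1 * nat \<lfloor>a2 * V\<rfloor>"
proof -
  have pos: "a2 * (1 - c) > 0" using a c by simp
  then have V0: "V > 0" using V by (meson divide_pos_pos less_le_trans zero_less_one)
  have big: "1 \<le> a2 * V * (1 - c)" using V pos by (simp add: divide_le_eq mult_ac)
  have "c * a2 * nat \<lfloor>a1 * V\<rfloor> \<le> c * a2 * (a1 * V)"
    using c a V0 by (intro mult_left_mono) auto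
  also have "\<dots> \<le> a1 * (a2 * V - 1)"
    using mult_left_mono[OF big, of a1] a by (simp add: algebra_simps)
  also have "\<dots> \<le> a1 * nat \<lfloor>a2 * V\<rfloor>"
    using a V0 by (intro mult_left_mono) auto
  finally show ?thesis .
qed

lemma profile_entropy_quot_le_scaled:
  assumes r: "packing_profile r" and a: "0 < a1" "a1 < a2" and c: "0 < c" "c < 1"
    and V: "1 / (a2 * (1 - c)) \<le> V"
  shows "profile_entropy_quot r V a2 \<le> ereal c * profile_entropy_quot r V a1"
proof -
  define N1 N2 where "N1 = nat \<lfloor>a1 * V\<rfloor>" and "N2 = nat \<lfloor>a2 * V\<rfloor>"
  have "a2 * (1 - c) > 0" using a c by simp
  then have V0: "V > 0" using V by (meson divide_pos_pos less_le_trans zero_less_one)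
  have N12: "N1 \<le> N2" unfolding N1_def N2_def
    using a V0 by (intro nat_mono floor_mono) simp
  have Q1: "profile_entropy_quot r V a1 = (if r N1 = 0 then -\<infinity> else ereal (ln (r N1) / (a1 * V)))"
    and Q2: "profile_entropy_quot r V a2 = (if r N2 = 0 then -\<infinity> else ereal (ln (r N2) / (a2 * V)))"
    by (simp_all add: profile_entropy_quot_def N1_def N2_def)
  consider "r N2 = 0" | "N1 = 0" | "r N2 > 0" "1 \<le> N1"
    using packing_profileD(2)[OF r, of N2] by linarith
  then show ?thesis
  proof cases
    case 1
    then show ?thesis by (simp add: Q2)
  next
    case 2
    moreover have "profile_entropy_quot r V a2 \<le> 0"
      using r a V0 by (intro profile_entropy_quot_nonpos) auto
    ultimately show ?thesis by (simp add: Q1 packing_profileD(1)[OF r] zero_ereal_def)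
  next
    case 3
    note mono = ln_packing_profile_mono[OF r 3(2) N12 3(1)]
    have "ln (r N1) \<le> 0"
      using packing_profileD(3)[OF r, of N1] mono(1) by simp
    have "N1 * (a1 * ln (r N2)) \<le> a1 * (N2 * ln (r N1))"
      using mono(2) a by (simp add: mult.left_commute mult_left_mono)
    also have "\<dots> = (a1 * N2) * ln (r N1)" by simp
    also have "\<dots> \<le> (c * a2 * N1) * ln (r N1)"
      using floor_mult_ratio_ge[OF a c V] \<open>ln (r N1) \<le> 0\<close>
      unfolding N1_def N2_def by (rule mult_right_mono_neg)
    also have "\<dots> = N1 * (c * a2 * ln (r N1))" by simp
    finally have "a1 * ln (r N2) \<le> c * a2 * ln (r N1)"
      using 3(2) by simp
    then have "ln (r N2) / (a2 * V) \<le> c * (ln (r N1) / (a1 * V))"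
      using a V0 by (simp add: field_simps)
    then show ?thesis
      using 3 mono(1) by (simp add: Q1 Q2)
  qed
qed

lemma ereal_le_of_le_scaled:
  fixes x y :: ereal
  assumes "y \<le> 0" and scaled: "\<And>c. 0 < c \<Longrightarrow> c < 1 \<Longrightarrow> x \<le> ereal c * y"
  shows "x \<le> y"
proof (cases y)
  case (real l)
  show ?thesis
  proof (cases x)
    case (real u)
    have "- l \<le> - u"
    proof (rule field_le_mult_one_interval)
      fix z :: real assume "0 < z" "z < 1"
      then show "z * - l \<le> - u" using scaled[of z] real \<open>y = ereal l\<close> by simp
    qed
    then show ?thesis using real \<open>y = ereal l\<close> by simp
  next
    case PInf
    then show ?thesis using scaled[of "1/2"] real by simp
  qed simp
next
  case MInf
  then show ?thesis using scaled[of "1/2"] by simp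
qed (use assms(1) in simp)

lemma Liminf_le_Liminf_of_scaled:
  fixes f g :: "'a \<Rightarrow> ereal"
  assumes F: "F \<noteq> bot" and f: "\<forall>\<^sub>F x in F. f x \<le> 0"
    and g: "\<And>c. 0 < c \<Longrightarrow> c < 1 \<Longrightarrow> \<forall>\<^sub>F x in F. g x \<le> ereal c * f x"
  shows "Liminf F g \<le> Liminf F f"
proof (rule ereal_le_of_le_scaled)
  show "Liminf F f \<le> 0"
    using Liminf_le_Limsup[OF F] Limsup_bounded[OF f] by (rule order_trans)
  fix c :: real assume c: "0 < c" "c < 1"
  have "Liminf F g \<le> Liminf F (\<lambda>x. ereal c * f x)"
    by (rule Liminf_mono[OF g[OF c]])
  also have "\<dots> = ereal c * Liminf F f"
    using c F by (intro Liminf_ereal_mult_left) auto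
  finally show "Liminf F g \<le> ereal c * Liminf F f" .
qed

section \<open>The Loomis-Whitney inequality and separated tuples\<close>

definition separated_tuples :: "'a set \<Rightarrow> ('a \<Rightarrow> 'a \<Rightarrow> bool) \<Rightarrow> 'i set \<Rightarrow> ('i \<Rightarrow> 'a) set" where
  "separated_tuples S D J = {xs \<in> PiE J (\<lambda>_. S). \<forall>i\<in>J. \<forall>j\<in>J. i \<noteq> j \<longrightarrow> D (xs i) (xs j)}"

lemma mem_slices_of_projections:
  assumes "j \<notin> I" and proj: "\<And>x i. x \<in> E \<Longrightarrow> i \<in> insert j I \<Longrightarrow> restrict x (insert j I - {i}) \<in> F i"
    and x: "x \<in> space (PiM I (\<lambda>_. N))" and xE: "x(j := y) \<in> E"
  shows "x \<in> F j"
    and "i \<in> I \<Longrightarrow> restrict x (I - {i}) \<in> {z \<in> space (PiM (I - {i}) (\<lambda>_. N)). z(j := y) \<in> F i}"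
proof -
  have "restrict (x(j := y)) (insert j I - {j}) = x"
    using x assms(1) by (auto simp: space_PiM PiE_def extensional_def fun_eq_iff)
  then show "x \<in> F j" using proj[OF xE insertI1] by simp
  assume i: "i \<in> I"
  have "restrict (x(j := y)) (insert j I - {i}) = (restrict x (I - {i}))(j := y)"
    using i assms(1) by (auto simp: restrict_def fun_eq_iff)
  then have "(restrict x (I - {i}))(j := y) \<in> F i"
    using proj[OF xE insertI2[OF i]] by simp
  moreover have "restrict x (I - {i}) \<in> space (PiM (I - {i}) (\<lambda>_. N))"
    using x by (auto simp: space_PiM PiE_def Pi_def extensional_def)
  ultimately show "restrict x (I - {i}) \<in> {z \<in> space (PiM (I - {i}) (\<lambda>_. N)). z(j := y) \<in> F i}"
    by simp
qed

context
  fixes N :: "'a measure"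
  assumes sigma_finite_N: "sigma_finite_measure N"
begin

lemma emeasure_PiM_insert_slice:
  assumes I: "finite I" "j \<notin> I" and E: "E \<in> sets (PiM (insert j I) (\<lambda>_. N))"
  defines "slice y \<equiv> {x \<in> space (PiM I (\<lambda>_. N)). x(j := y) \<in> E}"
  shows "\<And>y. y \<in> space N \<Longrightarrow> slice y \<in> sets (PiM I (\<lambda>_. N))"
    and "(\<lambda>y. emeasure (PiM I (\<lambda>_. N)) (slice y)) \<in> borel_measurable N"
    and "emeasure (PiM (insert j I) (\<lambda>_. N)) E = (\<integral>\<^sup>+y. emeasure (PiM I (\<lambda>_. N)) (slice y) \<partial>N)"
proof -
  interpret product_sigma_finite "\<lambda>_. N"
    using sigma_finite_N by (simp add: product_sigma_finite_def)
  interpret finite_product_sigma_finite "\<lambda>_. N" I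
    by standard (simp add: I)
  note [measurable] = E
  show slice: "slice y \<in> sets (PiM I (\<lambda>_. N))" if "y \<in> space N" for y
  proof -
    have "(\<lambda>x. x(j := y)) \<in> measurable (PiM I (\<lambda>_. N)) (PiM (insert j I) (\<lambda>_. N))"
      using that by measurable
    from measurable_sets[OF this E] show ?thesis
      by (simp add: slice_def vimage_def Int_def conj_commute)
  qed
  have eq: "(\<integral>\<^sup>+x. indicator E (x(j := y)) \<partial>PiM I (\<lambda>_. N)) = emeasure (PiM I (\<lambda>_. N)) (slice y)"
    if "y \<in> space N" for y
  proof -
    have "(\<integral>\<^sup>+x. indicator E (x(j := y)) \<partial>PiM I (\<lambda>_. N)) =
        (\<integral>\<^sup>+x. indicator (slice y) x \<partial>PiM I (\<lambda>_. N))"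
      by (intro nn_integral_cong) (auto simp: slice_def indicator_def)
    then show ?thesis using slice[OF that] by simp
  qed
  have "(\<lambda>y. \<integral>\<^sup>+x. indicator E (x(j := y)) \<partial>PiM I (\<lambda>_. N)) \<in> borel_measurable N"
    by measurable
  then show "(\<lambda>y. emeasure (PiM I (\<lambda>_. N)) (slice y)) \<in> borel_measurable N"
    by (rule measurable_cong[THEN iffD1, rotated]) (simp add: eq)
  have "emeasure (PiM (insert j I) (\<lambda>_. N)) E = (\<integral>\<^sup>+x. indicator E x \<partial>PiM (insert j I) (\<lambda>_. N))"
    by simp
  also have "\<dots> = (\<integral>\<^sup>+y. (\<integral>\<^sup>+x. indicator E (x(j := y)) \<partial>PiM I (\<lambda>_. N)) \<partial>N)"
    by (rule product_nn_integral_insert_rev) (use I in auto)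
  also have "\<dots> = (\<integral>\<^sup>+y. emeasure (PiM I (\<lambda>_. N)) (slice y) \<partial>N)"
    using eq by (intro nn_integral_cong) auto
  finally show "emeasure (PiM (insert j I) (\<lambda>_. N)) E = (\<integral>\<^sup>+y. emeasure (PiM I (\<lambda>_. N)) (slice y) \<partial>N)" .
qed

(* For card J = 1 and E = {} the left-hand side is 0 ^ 0 = 1, hence the side condition. *)
lemma Loomis_Whitney_inequality:
  assumes "finite J"
  shows "E \<in> sets (PiM J (\<lambda>_. N)) \<Longrightarrow> (\<And>i. i \<in> J \<Longrightarrow> F i \<in> sets (PiM (J - {i}) (\<lambda>_. N))) \<Longrightarrow>
    (\<And>x i. x \<in> E \<Longrightarrow> i \<in> J \<Longrightarrow> restrict x (J - {i}) \<in> F i) \<Longrightarrow> E \<noteq> {} \<or> 2 \<le> card J \<Longrightarrow>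
    emeasure (PiM J (\<lambda>_. N)) E ^ (card J - 1) \<le> (\<Prod>i\<in>J. emeasure (PiM (J - {i}) (\<lambda>_. N)) (F i))"
  using assms
proof (induction J arbitrary: E F rule: finite_induct)
  case empty
  then show ?case by simp
next
  case (insert j I)
  let ?P = "\<lambda>K. PiM K (\<lambda>_. N)"
  show ?case
  proof (cases "I = {}")
    case True
    with insert.prems(3,4) have "(\<lambda>_. undefined) \<in> F j"
      by (auto simp: restrict_def cong: restrict_cong)
    moreover have "F j \<subseteq> {\<lambda>_. undefined}"
      using sets.sets_into_space[OF insert.prems(2)[of j]] True by (simp add: PiM_empty)
    ultimately have "F j = {\<lambda>_. undefined}" by auto
    then show ?thesis using True by simp
  next
    case False
    have k: "card I > 0" using False insert.hyps by (simp add: card_gt_0_iff)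
    have minus: "insert j I - {i} = insert j (I - {i})" if "i \<in> I" for i
      using insert.hyps that by auto
    define Es where "Es y = {x \<in> space (?P I). x(j := y) \<in> E}" for y
    define Fs where "Fs i y = {x \<in> space (?P (I - {i})). x(j := y) \<in> F i}" for i y
    note E_slices = emeasure_PiM_insert_slice[OF insert.hyps(1,2) insert.prems(1), folded Es_def]
    have F_slices:
      "\<And>y. y \<in> space N \<Longrightarrow> Fs i y \<in> sets (?P (I - {i}))"
      "(\<lambda>y. emeasure (?P (I - {i})) (Fs i y)) \<in> borel_measurable N"
      "emeasure (?P (insert j I - {i})) (F i) = (\<integral>\<^sup>+y. emeasure (?P (I - {i})) (Fs i y) \<partial>N)"
      if "i \<in> I" for i
      using emeasure_PiM_insert_slice[of "I - {i}" j "F i"] insert.hyps insert.prems(2)[of i] that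
      by (simp_all add: minus Fs_def)
    have "emeasure (?P I) (Es y) ^ card I
        \<le> emeasure (?P I) (F j) * (\<Prod>i\<in>I. emeasure (?P (I - {i})) (Fs i y))"
      if y: "y \<in> space N" for y
    proof (cases "Es y = {}")
      case True
      then show ?thesis using k by (simp add: power_0_left)
    next
      case False
      note slices = mem_slices_of_projections[OF insert.hyps(2) insert.prems(3)]
      have "Es y \<subseteq> F j"
        using slices(1) unfolding Es_def by blast
      then have "emeasure (?P I) (Es y) \<le> emeasure (?P I) (F j)"
        using insert.prems(2)[of j] insert.hyps by (intro emeasure_mono) auto
      moreover have "emeasure (?P I) (Es y) ^ (card I - 1) \<le> (\<Prod>i\<in>I. emeasure (?P (I - {i})) (Fs i y))"
      proof (rule insert.IH)
        show "Es y \<in> sets (?P I)" using E_slices(1)[OF y] .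
        show "Fs i y \<in> sets (?P (I - {i}))" if "i \<in> I" for i using F_slices(1)[OF that y] .
        show "restrict x (I - {i}) \<in> Fs i y" if "x \<in> Es y" and "i \<in> I" for x i
          using slices(2) that unfolding Es_def Fs_def by blast
      qed (use False in simp)
      ultimately show ?thesis
        using k by (simp add: power_eq_if mult_mono)
    qed
    then have "(\<integral>\<^sup>+y. emeasure (?P I) (Es y) \<partial>N) ^ card I
        \<le> emeasure (?P I) (F j) * (\<Prod>i\<in>I. \<integral>\<^sup>+y. emeasure (?P (I - {i})) (Fs i y) \<partial>N)"
      using E_slices(2) F_slices(2)
      by (intro nn_integral_power_le_prod_nn_integral[OF insert.hyps(1) False]) auto
    also have "\<dots> = (\<Prod>i\<in>insert j I. emeasure (?P (insert j I - {i})) (F i))"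
      using insert.hyps F_slices(3) by (simp add: prod.insert cong: prod.cong)
    finally show ?thesis
      using E_slices(3) insert.hyps by simp
  qed
qed

lemma distr_PiM_reindex_bij:
  assumes I: "finite I" and g: "bij_betw g I K"
  shows "distr (PiM K (\<lambda>_. N)) (PiM I (\<lambda>_. N)) (\<lambda>\<omega>. \<lambda>i\<in>I. \<omega> (g i)) = PiM I (\<lambda>_. N)"
proof -
  interpret product_sigma_finite "\<lambda>_. N"
    using sigma_finite_N by (simp add: product_sigma_finite_def)
  let ?T = "\<lambda>\<omega>. \<lambda>i\<in>I. \<omega> (g i)"
  have K: "finite K" using I g bij_betw_finite by blast
  define h where "h = the_inv_into I g"
  have gi: "\<And>i. i \<in> I \<Longrightarrow> g i \<in> K" and hk: "\<And>k. k \<in> K \<Longrightarrow> h k \<in> I"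
    and hg: "\<And>i. i \<in> I \<Longrightarrow> h (g i) = i" and gh: "\<And>k. k \<in> K \<Longrightarrow> g (h k) = k"
    using g unfolding h_def
    by (auto simp: bij_betw_def the_inv_into_f_f f_the_inv_into_f the_inv_into_into)
  have T: "?T \<in> measurable (PiM K (\<lambda>_. N)) (PiM I (\<lambda>_. N))"
    by (rule measurable_restrict) (use gi in measurable)
  show ?thesis
  proof (rule PiM_eqI[OF I])
    fix A assume A: "\<And>i. i \<in> I \<Longrightarrow> A i \<in> sets N"
    have "?T -` PiE I A \<inter> space (PiM K (\<lambda>_. N)) = PiE K (\<lambda>k. A (h k))"
      using gi hk hg gh A[THEN sets.sets_into_space]
      by (auto simp: space_PiM PiE_def Pi_def extensional_def) (metis subsetD)+
    then have "emeasure (distr (PiM K (\<lambda>_. N)) (PiM I (\<lambda>_. N)) ?T) (PiE I A)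
        = emeasure (PiM K (\<lambda>_. N)) (PiE K (\<lambda>k. A (h k)))"
      using A I by (subst emeasure_distr[OF T]) (auto intro!: sets_PiM_I_finite)
    also have "\<dots> = (\<Prod>k\<in>K. emeasure N (A (h k)))"
      using A hk K by (subst emeasure_PiM) auto
    also have "\<dots> = (\<Prod>i\<in>I. emeasure N (A i))"
      using hg by (subst prod.reindex_bij_betw[OF g, symmetric]) (auto intro!: prod.cong)
    finally show "emeasure (distr (PiM K (\<lambda>_. N)) (PiM I (\<lambda>_. N)) ?T) (PiE I A)
        = (\<Prod>i\<in>I. emeasure N (A i))" .
  qed simp
qed

context
  fixes S :: "'a set" and D :: "'a \<Rightarrow> 'a \<Rightarrow> bool"
  assumes S: "S \<in> sets N"
    and D: "{z \<in> space (N \<Otimes>\<^sub>M N). D (fst z) (snd z)} \<in> sets (N \<Otimes>\<^sub>M N)"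
begin

lemma sets_separated_tuples:
  assumes J: "finite J"
  shows "separated_tuples S D J \<in> sets (PiM J (\<lambda>_. N))"
proof -
  have "Measurable.pred (PiM J (\<lambda>_. N)) (\<lambda>xs. D (xs i) (xs j))" if "i \<in> J" "j \<in> J" for i j
  proof -
    have "(\<lambda>xs. (xs i, xs j)) \<in> measurable (PiM J (\<lambda>_. N)) (N \<Otimes>\<^sub>M N)"
      using that by measurable
    from pred_sets1[OF D this] show ?thesis by simp
  qed
  then have "Measurable.pred (PiM J (\<lambda>_. N)) (\<lambda>xs. \<forall>i\<in>J. \<forall>j\<in>J. i \<noteq> j \<longrightarrow> D (xs i) (xs j))"
    using J by (intro pred_intros_finite pred_intros_logic) auto
  moreover have "PiE J (\<lambda>_. S) \<in> sets (PiM J (\<lambda>_. N))"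
    using S J by (intro sets_PiM_I_finite) auto
  moreover have "separated_tuples S D J = PiE J (\<lambda>_. S) \<inter>
      {xs \<in> space (PiM J (\<lambda>_. N)). \<forall>i\<in>J. \<forall>j\<in>J. i \<noteq> j \<longrightarrow> D (xs i) (xs j)}"
    using sets.sets_into_space[OF calculation(2)] by (auto simp: separated_tuples_def)
  ultimately show ?thesis by (auto simp: Measurable.pred_def)
qed

lemma emeasure_separated_tuples_reindex:
  assumes I: "finite I" and g: "bij_betw g I K"
  shows "emeasure (PiM K (\<lambda>_. N)) (separated_tuples S D K) = emeasure (PiM I (\<lambda>_. N)) (separated_tuples S D I)"
proof -
  let ?T = "\<lambda>\<omega>. \<lambda>i\<in>I. \<omega> (g i)"
  have T: "?T \<in> measurable (PiM K (\<lambda>_. N)) (PiM I (\<lambda>_. N))"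
    using g by (intro measurable_restrict) (auto simp: bij_betw_def)
  have "?T -` separated_tuples S D I \<inter> space (PiM K (\<lambda>_. N)) = separated_tuples S D K"
  proof -
    have "(\<forall>i\<in>I. \<forall>j\<in>I. i \<noteq> j \<longrightarrow> D (\<omega> (g i)) (\<omega> (g j))) \<longleftrightarrow>
        (\<forall>k\<in>K. \<forall>l\<in>K. k \<noteq> l \<longrightarrow> D (\<omega> k) (\<omega> l))" for \<omega>
      using g by (auto simp: bij_betw_def inj_on_def; metis)
    moreover have "(\<forall>i\<in>I. \<omega> (g i) \<in> S) \<longleftrightarrow> (\<forall>k\<in>K. \<omega> k \<in> S)" for \<omega>
      using g by (auto simp: bij_betw_def)
    ultimately show ?thesis
      using sets.sets_into_space[OF S]
      by (auto simp: separated_tuples_def space_PiM PiE_iff extensional_def)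
  qed
  then show ?thesis
    using distr_PiM_reindex_bij[OF I g] sets_separated_tuples[OF I] T
    by (metis emeasure_distr)
qed

(* Deleting any one of t + 1 separated points leaves t separated points. *)
lemma emeasure_separated_tuples_Suc_power_le:
  "emeasure (PiM {..<Suc t} (\<lambda>_. N)) (separated_tuples S D {..<Suc t}) ^ t
    \<le> emeasure (PiM {..<t} (\<lambda>_. N)) (separated_tuples S D {..<t}) ^ Suc t"
proof (cases "t = 0")
  case True
  then show ?thesis by (simp add: separated_tuples_def)
next
  case False
  let ?J = "{..<Suc t}"
  have "emeasure (PiM ?J (\<lambda>_. N)) (separated_tuples S D ?J) ^ (card ?J - 1)
      \<le> (\<Prod>i\<in>?J. emeasure (PiM (?J - {i}) (\<lambda>_. N)) (separated_tuples S D (?J - {i})))"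
  proof (rule Loomis_Whitney_inequality)
    show "restrict x (?J - {i}) \<in> separated_tuples S D (?J - {i})"
      if "x \<in> separated_tuples S D ?J" for x i
      using that by (auto simp: separated_tuples_def)
  qed (use False sets_separated_tuples in auto)
  also have "\<dots> = (\<Prod>i\<in>?J. emeasure (PiM {..<t} (\<lambda>_. N)) (separated_tuples S D {..<t}))"
  proof (rule prod.cong[OF refl])
    fix i assume "i \<in> ?J"
    then have "card {..<t} = card (?J - {i})" by simp
    then obtain h where "bij_betw h {..<t} (?J - {i})"
      using finite_same_card_bij[of "{..<t}" "?J - {i}"] by auto
    then show "emeasure (PiM (?J - {i}) (\<lambda>_. N)) (separated_tuples S D (?J - {i}))
        = emeasure (PiM {..<t} (\<lambda>_. N)) (separated_tuples S D {..<t})"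
      by (intro emeasure_separated_tuples_reindex) simp_all
  qed
  finally show ?thesis by simp
qed

lemma emeasure_separated_tuples_power_le:
  assumes "1 \<le> a" and "a \<le> b"
  shows "emeasure (PiM {..<b} (\<lambda>_. N)) (separated_tuples S D {..<b}) ^ a
    \<le> emeasure (PiM {..<a} (\<lambda>_. N)) (separated_tuples S D {..<a}) ^ b"
  using assms(2)
proof (induction b rule: dec_induct)
  case base
  then show ?case by simp
next
  case (step b)
  let ?M = "\<lambda>t. emeasure (PiM {..<t} (\<lambda>_. N)) (separated_tuples S D {..<t})"
  have "(?M (Suc b) ^ a) ^ b = (?M (Suc b) ^ b) ^ a" by (metis power_mult mult.commute)
  also have "\<dots> \<le> (?M b ^ Suc b) ^ a"
    by (rule power_mono_ennreal[OF emeasure_separated_tuples_Suc_power_le])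
  also have "\<dots> = (?M b ^ a) ^ Suc b" by (metis power_mult mult.commute)
  also have "\<dots> \<le> (?M a ^ b) ^ Suc b" by (rule power_mono_ennreal[OF step.IH])
  also have "\<dots> = (?M a ^ Suc b) ^ b" by (metis power_mult mult.commute)
  finally show ?case
    by (rule power_le_power_imp_le_ennreal) (use assms(1) step.hyps in auto)
qed

lemma emeasure_separated_tuples_le:
  "emeasure (PiM {..<t} (\<lambda>_. N)) (separated_tuples S D {..<t}) \<le> emeasure N S ^ t"
proof -
  interpret product_sigma_finite "\<lambda>_. N"
    using sigma_finite_N by (simp add: product_sigma_finite_def)
  have "emeasure (PiM {..<t} (\<lambda>_. N)) (separated_tuples S D {..<t})
      \<le> emeasure (PiM {..<t} (\<lambda>_. N)) (PiE {..<t} (\<lambda>_. S))"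
    using S by (intro emeasure_mono sets_PiM_I_finite) (auto simp: separated_tuples_def)
  also have "\<dots> = emeasure N S ^ t"
    using S by (subst emeasure_PiM) auto
  finally show ?thesis .
qed


lemma packing_profile_separated_tuples:
  assumes "emeasure N S = ennreal V" and "V > 0"
  shows "packing_profile
    (\<lambda>t. if t = 0 then 1 else measure (PiM {..<t} (\<lambda>_. N)) (separated_tuples S D {..<t}) / V ^ t)"
proof -
  define M where "M t = measure (PiM {..<t} (\<lambda>_. N)) (separated_tuples S D {..<t})" for t :: nat
  have E_le: "emeasure (PiM {..<t} (\<lambda>_. N)) (separated_tuples S D {..<t}) \<le> ennreal (V ^ t)"
    for t :: nat
    using emeasure_separated_tuples_le[of t] assms by (simp add: ennreal_power)
  have E_eq: "emeasure (PiM {..<t} (\<lambda>_. N)) (separated_tuples S D {..<t}) = ennreal (M t)"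
    for t :: nat
    using E_le[of t, THEN neq_top_trans[OF ennreal_neq_top]]
    by (simp add: M_def emeasure_eq_ennreal_measure)
  have M0: "0 \<le> M t" for t by (simp add: M_def)
  show ?thesis
    unfolding M_def[symmetric]
  proof (rule packing_profile_normalize[OF assms(2) M0])
    show "M t \<le> V ^ t" for t
      using E_le[of t, unfolded E_eq] assms(2) by simp
    show "M b ^ a \<le> M a ^ b" if "1 \<le> a" "a \<le> b" for a b
      using emeasure_separated_tuples_power_le[OF that]
      by (simp add: E_eq ennreal_power M0)
  qed
qed

end

end

section \<open>Balls of the mixed norm\<close>

lemma space_Rn: "space (Rn n) = PiE {..<n} (\<lambda>_. UNIV)"
  by (simp add: Rn_def space_PiM)

lemma sigma_finite_Rn: "sigma_finite_measure (Rn n)"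
proof -
  interpret product_sigma_finite "\<lambda>_::nat. lborel :: real measure"
    by (simp add: product_sigma_finite_def sigma_finite_lborel)
  show ?thesis unfolding Rn_def by (rule sigma_finite) simp
qed

lemma measurable_component_Rn:
  assumes "l < n"
  shows "(\<lambda>x. x l) \<in> borel_measurable (Rn n)"
proof -
  have "(\<lambda>x. x l) \<in> measurable (PiM {..<n} (\<lambda>_. lborel)) lborel"
    by (rule measurable_component_singleton) (use assms in simp)
  then show ?thesis unfolding Rn_def by simp
qed

lemma emeasure_Rn_cube:
  assumes "c \<ge> 0"
  shows "emeasure (Rn n) (PiE {..<n} (\<lambda>_. {-c..c})) = ennreal ((2 * c) ^ n)"
proof -
  interpret product_sigma_finite "\<lambda>_::nat. lborel :: real measure"
    by (simp add: product_sigma_finite_def sigma_finite_lborel)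
  have "emeasure (Rn n) (PiE {..<n} (\<lambda>_. {-c..c})) = (\<Prod>i<n. emeasure lborel {-c..c})"
    unfolding Rn_def by (subst emeasure_PiM) auto
  also have "\<dots> = ennreal ((2 * c) ^ n)"
    using assms by (simp add: ennreal_power)
  finally show ?thesis .
qed

lemma sets_Rn_cube: "PiE {..<n} (\<lambda>_. {-c..c}) \<in> sets (Rn n)"
  unfolding Rn_def by (intro sets_PiM_I_finite) auto

lemma borel_measurable_pknorm:
  assumes "\<And>l. l < n \<Longrightarrow> (\<lambda>x. u x l) \<in> borel_measurable M"
    and "\<And>j. j < m \<Longrightarrow> k (Suc j) \<le> n"
  shows "(\<lambda>x. pknorm p k m (u x)) \<in> borel_measurable M"
proof -
  have "(\<lambda>x. (sqrt (\<Sum>l\<in>{k j..<k (Suc j)}. (u x l)^2)) powr p) \<in> borel_measurable M" if "j < m" for j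
  proof -
    have "(\<lambda>x. \<Sum>l\<in>{k j..<k (Suc j)}. (u x l)^2) \<in> borel_measurable M"
      using assms(1) assms(2)[OF that] by (intro borel_measurable_sum borel_measurable_power) auto
    then show ?thesis by measurable
  qed
  then have [measurable]: "(\<lambda>x. \<Sum>j<m. (sqrt (\<Sum>l\<in>{k j..<k (Suc j)}. (u x l)^2)) powr p) \<in> borel_measurable M"
    by (intro borel_measurable_sum) auto
  show ?thesis unfolding pknorm_def by measurable
qed

lemma ex_block_containing:
  fixes k :: "nat \<Rightarrow> nat"
  assumes "k 0 = 0" and "l < k i"
  shows "\<exists>j<i. k j \<le> l \<and> l < k (Suc j)"
  using assms(2)
proof (induction i)
  case 0
  then show ?case using assms(1) by simp
next
  case (Suc i)
  then show ?case
    by (cases "l < k i") (auto intro: less_SucI)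
qed

lemma abs_le_pknorm:
  assumes "p > 0" and "j < m" and "k j \<le> l" "l < k (Suc j)"
  shows "\<bar>x l\<bar> \<le> pknorm p k m x"
proof -
  define s where "s j = sqrt (\<Sum>i\<in>{k j..<k (Suc j)}. (x i)^2)" for j
  have "\<bar>x l\<bar> = sqrt ((x l)^2)" by simp
  also have "\<dots> \<le> s j" unfolding s_def
    by (intro real_sqrt_le_mono member_le_sum) (use assms(3,4) in auto)
  also have "\<dots> = (s j powr p) powr (1/p)"
    using assms(1) by (simp add: powr_powr s_def sum_nonneg)
  also have "\<dots> \<le> (\<Sum>j<m. s j powr p) powr (1/p)"
    using assms(1,2) by (intro powr_mono2 member_le_sum) auto
  also have "\<dots> = pknorm p k m x" by (simp add: pknorm_def s_def)
  finally show ?thesis .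
qed

lemma pknorm_le_of_block_norm_le:
  assumes "p \<ge> 1" and "B \<ge> 0"
    and "\<And>j. j < m \<Longrightarrow> sqrt (\<Sum>i\<in>{k j..<k (Suc j)}. (x i)^2) \<le> B"
  shows "pknorm p k m x \<le> m * B"
proof -
  have "(\<Sum>j<m. (sqrt (\<Sum>i\<in>{k j..<k (Suc j)}. (x i)^2)) powr p) \<le> m * B powr p"
  proof -
    have "(\<Sum>j<m. (sqrt (\<Sum>i\<in>{k j..<k (Suc j)}. (x i)^2)) powr p) \<le> (\<Sum>j<m. B powr p)"
      using assms(1,3) by (intro sum_mono powr_mono2) (auto intro!: sum_nonneg)
    then show ?thesis by simp
  qed
  then have "pknorm p k m x \<le> (m * B powr p) powr (1/p)"
    unfolding pknorm_def using assms(1) by (intro powr_mono2) (auto intro!: sum_nonneg)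
  also have "\<dots> = m powr (1/p) * B"
    using assms(1,2) by (simp add: powr_mult powr_powr)
  also have "\<dots> \<le> m * B"
  proof (cases "m = 0")
    case False
    then have "real m powr (1/p) \<le> real m powr 1"
      using assms(1) by (intro powr_mono) auto
    then show ?thesis using assms(2) by (intro mult_right_mono) auto
  qed simp
  finally show ?thesis .
qed

lemma Zhat_eq_measure_separated_tuples:
  assumes "t > 0"
  shows "Zhat p k m n S t = measure (PiM {..<t} (\<lambda>_. Rn n))
    (separated_tuples S (\<lambda>x y. 2 * unit_radius p k m n \<le> pkdist p k m x y) {..<t}) / fact t"
proof -
  have "{xs \<in> PiE {..<t} (\<lambda>_. S). \<forall>i<t. \<forall>j<t. i \<noteq> j \<longrightarrow> 2 * unit_radius p k m n \<le> pkdist p k m (xs i) (xs j)}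
      = separated_tuples S (\<lambda>x y. 2 * unit_radius p k m n \<le> pkdist p k m x y) {..<t}"
    by (simp add: separated_tuples_def Ball_def)
  then show ?thesis using assms by (simp add: Zhat_def)
qed

context
  fixes p :: real and k :: "nat \<Rightarrow> nat" and m n :: nat
  assumes p: "p > 1" and m: "m \<ge> 1" and k0: "k 0 = 0" and km: "k m = n"
    and sm: "strict_mono_on {..m} k"
begin

lemma block_end_le_dim: "j < m \<Longrightarrow> k (Suc j) \<le> n"
  using strict_mono_on_leD[OF sm, of "Suc j" m] km by simp

lemma dim_pos: "n > 0"
  using strict_mono_onD[OF sm, of 0 m] m k0 km by simp

lemma sets_pkball: "pkball p k m n x R \<in> sets (Rn n)"
proof -
  have "(\<lambda>y. pkdist p k m x y) \<in> borel_measurable (Rn n)"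
    unfolding pkdist_def
  proof (rule borel_measurable_pknorm[where n = n])
    fix l assume "l < n"
    note [measurable] = measurable_component_Rn[OF this]
    show "(\<lambda>y. y l - x l) \<in> borel_measurable (Rn n)" by measurable
  qed (rule block_end_le_dim)
  then show ?thesis unfolding pkball_def by measurable
qed

lemma sets_pkdist_ge:
  "{z \<in> space (Rn n \<Otimes>\<^sub>M Rn n). c \<le> pkdist p k m (fst z) (snd z)} \<in> sets (Rn n \<Otimes>\<^sub>M Rn n)"
proof -
  have "(\<lambda>z. pkdist p k m (fst z) (snd z)) \<in> borel_measurable (Rn n \<Otimes>\<^sub>M Rn n)"
    unfolding pkdist_def
  proof (rule borel_measurable_pknorm[where n = n])
    fix l assume "l < n"
    note [measurable] = measurable_component_Rn[OF this]
    show "(\<lambda>z. snd z l - fst z l) \<in> borel_measurable (Rn n \<Otimes>\<^sub>M Rn n)" by measurable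
  qed (rule block_end_le_dim)
  then show ?thesis by measurable
qed

lemma pkball_subset_cube: "pkball p k m n (origin n) R \<subseteq> PiE {..<n} (\<lambda>_. {-R..R})"
proof
  fix y assume y: "y \<in> pkball p k m n (origin n) R"
  have "y l \<in> {-R..R}" if "l < n" for l
  proof -
    obtain j where "j < m" "k j \<le> l" "l < k (Suc j)"
      using ex_block_containing[of k l m] k0 km \<open>l < n\<close> by auto
    then have "\<bar>y l - origin n l\<bar> \<le> pkdist p k m (origin n) y"
      unfolding pkdist_def using p by (intro abs_le_pknorm[where x = "\<lambda>i. y i - origin n i"]) auto
    then show ?thesis using y \<open>l < n\<close> by (simp add: pkball_def origin_def abs_le_iff)
  qed
  then show "y \<in> PiE {..<n} (\<lambda>_. {-R..R})"
    using y by (auto simp: pkball_def space_Rn PiE_def Pi_def)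
qed

lemma cube_subset_pkball:
  assumes "R \<ge> 0"
  shows "PiE {..<n} (\<lambda>_. {-(R / (m * n))..R / (m * n)}) \<subseteq> pkball p k m n (origin n) R"
proof
  define a where "a = R / (m * n)"
  have a: "a \<ge> 0" and R: "R = m * (n * a)"
    using assms m dim_pos by (simp_all add: a_def)
  fix y assume y: "y \<in> PiE {..<n} (\<lambda>_. {-(R / (m * n))..R / (m * n)})"
  have "sqrt (\<Sum>i\<in>{k j..<k (Suc j)}. (y i - origin n i)^2) \<le> n * a" if "j < m" for j
  proof -
    have block: "{k j..<k (Suc j)} \<subseteq> {..<n}" using block_end_le_dim[OF that] by auto
    have "(\<Sum>i\<in>{k j..<k (Suc j)}. (y i - origin n i)^2) \<le> card {k j..<k (Suc j)} * a^2"
    proof (rule sum_bounded_above)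
      fix i assume "i \<in> {k j..<k (Suc j)}"
      then have "\<bar>y i - origin n i\<bar> \<le> a"
        using y block by (auto simp: a_def origin_def PiE_def Pi_def abs_le_iff)
      then show "(y i - origin n i)^2 \<le> a^2"
        by (metis abs_ge_zero power2_abs power_mono)
    qed
    also have "\<dots> \<le> n * a^2"
      using card_mono[OF _ block] by (intro mult_right_mono) auto
    also have "\<dots> \<le> (n * a)^2"
    proof -
      have "real n * 1 \<le> real n * real n" using dim_pos by (intro mult_left_mono) auto
      from mult_right_mono[OF this zero_le_power2[of a]] show ?thesis
        by (simp add: power_mult_distrib power2_eq_square mult_ac)
    qed
    finally have "sqrt (\<Sum>i\<in>{k j..<k (Suc j)}. (y i - origin n i)^2) \<le> sqrt ((n * a)^2)"
      by (rule real_sqrt_le_mono)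
    then show ?thesis using a by simp
  qed
  then have "pknorm p k m (\<lambda>i. y i - origin n i) \<le> R"
    unfolding R using p a by (intro pknorm_le_of_block_norm_le) auto
  moreover have "y \<in> space (Rn n)" using y by (auto simp: space_Rn PiE_def Pi_def)
  ultimately show "y \<in> pkball p k m n (origin n) R" by (simp add: pkball_def pkdist_def)
qed

lemma emeasure_pkball:
  assumes "R \<ge> 0"
  shows "emeasure (Rn n) (pkball p k m n (origin n) R) = vol n (pkball p k m n (origin n) R)"
proof -
  have "emeasure (Rn n) (pkball p k m n (origin n) R) \<le> emeasure (Rn n) (PiE {..<n} (\<lambda>_. {-R..R}))"
    by (rule emeasure_mono[OF pkball_subset_cube sets_Rn_cube])
  also have "\<dots> = ennreal ((2 * R) ^ n)"
    using assms by (rule emeasure_Rn_cube)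
  finally have "emeasure (Rn n) (pkball p k m n (origin n) R) \<noteq> top"
    by (metis ennreal_less_top le_less_trans less_irrefl)
  then show ?thesis by (simp add: vol_def emeasure_eq_ennreal_measure)
qed

lemma vol_pkball_ge:
  assumes "R \<ge> 0"
  shows "(2 * (R / (m * n))) ^ n \<le> vol n (pkball p k m n (origin n) R)"
proof -
  have "ennreal ((2 * (R / (m * n))) ^ n) = emeasure (Rn n) (PiE {..<n} (\<lambda>_. {-(R / (m * n))..R / (m * n)}))"
    using assms by (simp add: emeasure_Rn_cube)
  also have "\<dots> \<le> emeasure (Rn n) (pkball p k m n (origin n) R)"
    by (rule emeasure_mono[OF cube_subset_pkball[OF assms] sets_pkball])
  also have "\<dots> = ennreal (vol n (pkball p k m n (origin n) R))"
    by (rule emeasure_pkball[OF assms])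
  finally show ?thesis by (simp add: vol_def)
qed

lemma filterlim_vol_pkball_at_top:
  "filterlim (\<lambda>R. vol n (pkball p k m n (origin n) R)) at_top at_top"
proof (rule filterlim_at_top_mono)
  define c where "c = 2 / (m * n)"
  have c: "c > 0" using m dim_pos by (simp add: c_def)
  show "filterlim (\<lambda>R. c * R) at_top at_top"
    by (rule filterlim_tendsto_pos_mult_at_top[OF tendsto_const c filterlim_ident])
  have "c * R \<le> vol n (pkball p k m n (origin n) R)" if "R \<ge> 1 / c" for R
  proof -
    have R: "R \<ge> 0" "1 \<le> c * R"
      using that c order_trans[OF less_imp_le[OF divide_pos_pos[OF zero_less_one c]]]
      by (auto simp: field_simps)
    then have "c * R \<le> (c * R) ^ n"
      using dim_pos by (intro self_le_power) auto
    also have "\<dots> \<le> vol n (pkball p k m n (origin n) R)"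
      using vol_pkball_ge[OF R(1)] by (simp add: c_def)
    finally show ?thesis .
  qed
  then show "\<forall>\<^sub>F R in at_top. c * R \<le> vol n (pkball p k m n (origin n) R)"
    unfolding eventually_at_top_linorder by blast
qed

lemma entropy_quot_eq_profile_entropy_quot:
  assumes R: "R \<ge> 0" and V: "vol n (pkball p k m n (origin n) R) > 0"
  shows "\<exists>r. packing_profile r \<and>
    (\<forall>\<alpha>. entropy_quot p k m n \<alpha> R = profile_entropy_quot r (vol n (pkball p k m n (origin n) R)) \<alpha>)"
proof -
  define S where "S = pkball p k m n (origin n) R"
  define V where "V = vol n S"
  define D where "D x y \<longleftrightarrow> 2 * unit_radius p k m n \<le> pkdist p k m x y" for x y
  define r where "r t = (if t = 0 then 1
    else measure (PiM {..<t} (\<lambda>_. Rn n)) (separated_tuples S D {..<t}) / V ^ t)" for t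
  have V0: "V > 0" using V by (simp add: V_def S_def)
  have "packing_profile r"
    unfolding r_def
  proof (rule packing_profile_separated_tuples[OF sigma_finite_Rn])
    show "S \<in> sets (Rn n)" by (simp add: S_def sets_pkball)
    show "{z \<in> space (Rn n \<Otimes>\<^sub>M Rn n). D (fst z) (snd z)} \<in> sets (Rn n \<Otimes>\<^sub>M Rn n)"
      by (simp add: D_def sets_pkdist_ge)
    show "emeasure (Rn n) S = ennreal V" by (simp add: S_def V_def emeasure_pkball[OF R])
  qed (rule V0)
  moreover have ratio: "Zhat p k m n S t / (V ^ t / fact t) = r t" for t
  proof (cases "t = 0")
    case False
    then show ?thesis
      using V0 by (simp add: Zhat_eq_measure_separated_tuples r_def D_def[abs_def])
  qed (simp add: Zhat_def r_def)
  moreover have "Zhat p k m n S t = 0 \<longleftrightarrow> r t = 0" for t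
    using V0 by (simp flip: ratio)
  then have "entropy_quot p k m n \<alpha> R = profile_entropy_quot r V \<alpha>" for \<alpha>
    unfolding entropy_quot_def profile_entropy_quot_def Let_def S_def[symmetric] V_def[symmetric] ratio
    by simp
  ultimately show ?thesis by (auto simp: V_def S_def)
qed

lemma eventually_entropy_quot_eq_profile_entropy_quot:
  "\<forall>\<^sub>F R in at_top. B \<le> vol n (pkball p k m n (origin n) R) \<and> (\<exists>r. packing_profile r \<and>
    (\<forall>\<alpha>. entropy_quot p k m n \<alpha> R = profile_entropy_quot r (vol n (pkball p k m n (origin n) R)) \<alpha>))"
proof -
  have "\<forall>\<^sub>F R in at_top. 0 \<le> R \<and> B \<le> vol n (pkball p k m n (origin n) R) \<and>
      1 \<le> vol n (pkball p k m n (origin n) R)"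
    using filterlim_vol_pkball_at_top[unfolded filterlim_at_top]
    by (intro eventually_conj eventually_ge_at_top) auto
  then show ?thesis
  proof eventually_elim
    case (elim R)
    then show ?case
      using entropy_quot_eq_profile_entropy_quot[of R] by simp
  qed
qed

end

theorem lemma19:
  fixes p :: real and k :: "nat \<Rightarrow> nat" and m n :: nat and \<alpha>1 \<alpha>2 :: real
  assumes "p > 1" and "m \<ge> 1" and "k 0 = 0" and "k m = n"
    and "strict_mono_on {..m} k"
    and "0 < \<alpha>1" and "\<alpha>1 < \<alpha>2"
  shows "entropy_density p k m n \<alpha>1 \<ge> entropy_density p k m n \<alpha>2"
  unfolding entropy_density_def
proof (rule Liminf_le_Liminf_of_scaled)
  note profile = eventually_entropy_quot_eq_profile_entropy_quot[OF assms(1-5)]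
  show "\<forall>\<^sub>F R in at_top. entropy_quot p k m n \<alpha>1 R \<le> 0"
    using profile[of 0]
  proof eventually_elim
    case (elim R)
    then obtain r where "packing_profile r"
      and "entropy_quot p k m n \<alpha>1 R = profile_entropy_quot r (vol n (pkball p k m n (origin n) R)) \<alpha>1"
      by blast
    then show ?case using elim assms(6) by (simp add: profile_entropy_quot_nonpos)
  qed
  fix c :: real assume c: "0 < c" "c < 1"
  show "\<forall>\<^sub>F R in at_top. entropy_quot p k m n \<alpha>2 R \<le> ereal c * entropy_quot p k m n \<alpha>1 R"
    using profile[of "1 / (\<alpha>2 * (1 - c))"]
  proof eventually_elim
    case (elim R)
    then obtain r where "packing_profile r"
      and "\<And>\<alpha>. entropy_quot p k m n \<alpha> R = profile_entropy_quot r (vol n (pkball p k m n (origin n) R)) \<alpha>"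
      by blast
    then show ?case using elim assms(6,7) c by (simp add: profile_entropy_quot_le_scaled)
  qed
qed simp

end
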